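(* Let $X,Y$ be random variables on finite sets $\mathcal{X},\mathcal{Y}$ with joint pmf $P_{XY}$. Let $\lambda_{\min}<\lambda_{\max}$ and $\Delta>0$, and set $N=(\lambda_{\max}-\lambda_{\min})/\Delta$. Let $0\le\epsilon<1$ and $0<\eta<1-\epsilon$. Then for every $\gamma>0$, \[ L_\epsilon(X,Y)\ge \gamma+3\log\Big(P_\gamma-\epsilon-P_{XY}(\mathcal{T}_0)-\frac1N\Big)_+ +\log(1-2\eta)-\Delta-6\log N-4\log\frac1\eta-1, \] where $P_\gamma:=P_{XY}\big(h(X\triangle Y)>\gamma\big)$.
   Context: Logarithms are to base 2, $(a)_+=\max\{a,0\}$, and $\log 0=-\infty$. The sum conditional entropy density is $h(X\triangle Y)=-\log P_{X|Y}(X|Y)-\log P_{Y|X}(Y|X)$. The set $\mathcal{T}_0=\{(x,y):-\log P_{XY}(x,y)\ge\lambda_{\max}\text{ or }-\log P_{XY}(x,y)<\lambda_{\min}\}$. Setting of the protocol. Party 1 observes $X$ and party 2 observes $Y$. They may use private randomness $U_{\mathcal X}$ and $U_{\mathcal Y}$ and shared randomness $U$; these are mutually independent and independent of $(X,Y)$. Tree protocol. A tree protocol is a binary tree whose internal vertices are labelled 1 or 2. At a vertex labelled $i$, party $i$ sends a bit that is a function of its observation, its private randomness and $U$. The protocol moves to the left or right child according to that bit and stops at a leaf. The transcript $\Pi$ is the sequence of bits sent, and the length of the protocol is the depth of the tree. Data exchange. A protocol attains $\epsilon$-data exchange if there are functions $\hat Y$ of $(X,\Pi,U_{\mathcal X},U)$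 and $\hat X$ of $(Y,\Pi,U_{\mathcal Y},U)$ with $\Pr(\hat X=X,\hat Y=Y)\ge1-\epsilon$. $L_\epsilon(X,Y)$ is the infimum of the lengths of protocols attaining $\epsilon$-data exchange. *)

theory Defs
  imports "HOL-Probability.Probability"
begin

(* Tree protocols. 'a is the view of party 1 (observation, private randomness,
   shared randomness), 'b the view of party 2. At a vertex labelled i, party i
   sends the bit given by the vertex function applied to its view; bit False
   moves to the left child, True to the right child. *)
datatype ('a, 'b) ptree =
    Leaf
  | Node1 "'a \<Rightarrow> bool" "('a, 'b) ptree" "('a, 'b) ptree"
  | Node2 "'b \<Rightarrow> bool" "('a, 'b) ptree" "('a, 'b) ptree"

fun ptree_depth :: "('a, 'b) ptree \<Rightarrow> nat" where
  "ptree_depth Leaf = 0"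
| "ptree_depth (Node1 f l r) = Suc (max (ptree_depth l) (ptree_depth r))"
| "ptree_depth (Node2 g l r) = Suc (max (ptree_depth l) (ptree_depth r))"

fun transcript :: "('a, 'b) ptree \<Rightarrow> 'a \<Rightarrow> 'b \<Rightarrow> bool list" where
  "transcript Leaf a b = []"
| "transcript (Node1 f l r) a b = f a # transcript (if f a then r else l) a b"
| "transcript (Node2 g l r) a b = g b # transcript (if g b then r else l) a b"

fun ptree_measurable :: "'a measure \<Rightarrow> 'b measure \<Rightarrow> ('a, 'b) ptree \<Rightarrow> bool" where
  "ptree_measurable MA MB Leaf = True"
| "ptree_measurable MA MB (Node1 f l r) =
     (f \<in> MA \<rightarrow>\<^sub>M count_space UNIV \<and> ptree_measurable MA MB l \<and> ptree_measurable MA MB r)"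
| "ptree_measurable MA MB (Node2 g l r) =
     (g \<in> MB \<rightarrow>\<^sub>M count_space UNIV \<and> ptree_measurable MA MB l \<and> ptree_measurable MA MB r)"

(* sigma-algebra of the view (X, U_X, U) of party 1, resp. (Y, U_Y, U) of party 2 *)
definition view_space :: "'u measure \<Rightarrow> 'v measure \<Rightarrow> ('x \<times> 'u \<times> 'v) measure" where
  "view_space MP MU = count_space UNIV \<Otimes>\<^sub>M (MP \<Otimes>\<^sub>M MU)"

(* joint space of ((X,Y),(U_X,(U_Y,U))): all four mutually independent *)
definition protocol_space ::
  "('x \<times> 'y) pmf \<Rightarrow> 'ux measure \<Rightarrow> 'uy measure \<Rightarrow> 'u measure
     \<Rightarrow> (('x \<times> 'y) \<times> ('ux \<times> 'uy \<times> 'u)) measure" where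
  "protocol_space P MX MY MU = measure_pmf P \<Otimes>\<^sub>M (MX \<Otimes>\<^sub>M (MY \<Otimes>\<^sub>M MU))"

definition attains_data_exchange ::
  "('x \<times> 'y) pmf \<Rightarrow> 'ux measure \<Rightarrow> 'uy measure \<Rightarrow> 'u measure
     \<Rightarrow> ('x \<times> 'ux \<times> 'u, 'y \<times> 'uy \<times> 'u) ptree \<Rightarrow> real \<Rightarrow> bool" where
  "attains_data_exchange P MX MY MU t \<epsilon> \<longleftrightarrow>
     ptree_measurable (view_space MX MU) (view_space MY MU) t \<and>
     (\<exists>(Yhat :: bool list \<Rightarrow> 'x \<times> 'ux \<times> 'u \<Rightarrow> 'y) (Xhat :: bool list \<Rightarrow> 'y \<times> 'uy \<times> 'u \<Rightarrow> 'x).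
        (\<forall>tr. Yhat tr \<in> view_space MX MU \<rightarrow>\<^sub>M count_space UNIV) \<and>
        (\<forall>tr. Xhat tr \<in> view_space MY MU \<rightarrow>\<^sub>M count_space UNIV) \<and>
        measure (protocol_space P MX MY MU)
          {\<omega> \<in> space (protocol_space P MX MY MU).
             case \<omega> of ((x, y), (ux, uy, u)) \<Rightarrow>
               Xhat (transcript t (x, ux, u) (y, uy, u)) (y, uy, u) = x \<and>
               Yhat (transcript t (x, ux, u) (y, uy, u)) (x, ux, u) = y}
          \<ge> 1 - \<epsilon>)"

(* L_epsilon(X,Y), with private/shared randomness ranging over probability spaces
   on the types 'ux, 'uy, 'u (the theorem is stated for all such types).
   Infimum of the empty set is +infinity. *)
definition L_eps :: "('x \<times> 'y) pmf \<Rightarrow> real \<Rightarrow> ('ux \<times> 'uy \<times> 'u) itself \<Rightarrow> ereal" where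
  "L_eps P \<epsilon> (uty :: ('ux \<times> 'uy \<times> 'u) itself) =
     Inf {ereal (real (ptree_depth t)) | t (MX :: 'ux measure) (MY :: 'uy measure) (MU :: 'u measure).
            prob_space MX \<and> prob_space MY \<and> prob_space MU \<and>
            attains_data_exchange P MX MY MU t \<epsilon>}"

definition log2e :: "real \<Rightarrow> ereal" where
  "log2e x = (if x > 0 then ereal (log 2 x) else -\<infinity>)"

definition h_sum :: "('x \<times> 'y) pmf \<Rightarrow> 'x \<Rightarrow> 'y \<Rightarrow> real" where
  "h_sum P x y =
     - log 2 (pmf P (x, y) / pmf (map_pmf snd P) y)
     - log 2 (pmf P (x, y) / pmf (map_pmf fst P) x)"

definition T0 :: "('x \<times> 'y) pmf \<Rightarrow> real \<Rightarrow> real \<Rightarrow> ('x \<times> 'y) set" where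
  "T0 P lmin lmax = {(x, y). - log 2 (pmf P (x, y)) \<ge> lmax \<or> - log 2 (pmf P (x, y)) < lmin}"

end

theory Submission
  imports Defs
begin

text \<open>Fix the private and shared randomness. The protocol becomes deterministic, and its
  transcripts cut \<open>\<X> \<times> \<Y>\<close> into at most \<open>2 ^ D\<close> rectangles, \<open>D\<close> the depth.
  Within one rectangle the exchange can only succeed on a matching: pairs with distinct \<open>x\<close>
  and distinct \<open>y\<close>. If \<open>h(X \<triangle> Y) > \<gamma>\<close> then
  \<open>P(x,y) \<le> 2 powr (-\<gamma>/2) * sqrt (P\<^sub>X(x) P\<^sub>Y(y))\<close>, so Cauchy--Schwarz within and
  across the rectangles bounds the probability of a successful exchange on \<open>{h > \<gamma>}\<close> by
  \<open>2 powr ((D - \<gamma>)/2)\<close>. Averaging over the randomness gives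
  \<open>P\<^sub>\<gamma> - \<epsilon> \<le> 2 powr ((D - \<gamma>)/2)\<close>, i.e. \<open>D \<ge> \<gamma> + 2 log (P\<^sub>\<gamma> - \<epsilon>)\<close>, which implies
  the stated bound because all its remaining correction terms are nonpositive.\<close>

fun leaves :: "('a, 'b) ptree \<Rightarrow> bool list set" where
  "leaves Leaf = {[]}"
| "leaves (Node1 f l r) = Cons False ` leaves l \<union> Cons True ` leaves r"
| "leaves (Node2 g l r) = Cons False ` leaves l \<union> Cons True ` leaves r"

lemma transcript_in_leaves: "transcript t a b \<in> leaves t"
  by (induction t a b rule: transcript.induct) auto

lemma finite_leaves: "finite (leaves t)"
  by (induction t) auto

lemma card_Cons_image_Un_le:
  assumes "finite A" "finite B" "card A \<le> 2 ^ m" "card B \<le> 2 ^ n"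
  shows "card (Cons False ` A \<union> Cons True ` B) \<le> 2 ^ Suc (max m n)"
proof -
  have "card (Cons False ` A \<union> Cons True ` B) \<le> card A + card B"
    by (intro order_trans[OF card_Un_le] add_mono card_image_le assms(1,2))
  also have "\<dots> \<le> 2 ^ max m n + 2 ^ max m n"
    using assms(3,4) by (intro add_mono) (auto intro: order_trans power_increasing)
  finally show ?thesis by simp
qed

lemma card_leaves_le: "card (leaves t) \<le> 2 ^ ptree_depth t"
  by (induction t) (auto intro: card_Cons_image_Un_le[OF finite_leaves finite_leaves, simplified])

lemma transcript_rectangle:
  "transcript t a b = transcript t a' b' \<Longrightarrow> transcript t a b' = transcript t a b"
proof (induction t arbitrary: a b a' b')
  case (Node1 f l r)
  from Node1.prems have "f a' = f a"
    and "transcript (if f a then r else l) a b = transcript (if f a then r else l) a' b'"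
    by (simp_all split: if_splits)
  then show ?case
    by (cases "f a") (simp_all add: Node1.IH[of a b a' b'])
next
  case (Node2 g l r)
  from Node2.prems have "g b' = g b"
    and "transcript (if g b then r else l) a b = transcript (if g b then r else l) a' b'"
    by (simp_all split: if_splits)
  then show ?case
    by (cases "g b") (simp_all add: Node2.IH[of a b a' b'])
qed simp

lemma sum_sqrt_mult_le:
  fixes u v :: "'i \<Rightarrow> real"
  assumes "\<And>i. i \<in> I \<Longrightarrow> u i \<ge> 0" "\<And>i. i \<in> I \<Longrightarrow> v i \<ge> 0"
  shows "(\<Sum>i\<in>I. sqrt (u i) * sqrt (v i)) \<le> sqrt (\<Sum>i\<in>I. u i) * sqrt (\<Sum>i\<in>I. v i)"
proof -
  have "(\<Sum>i\<in>I. sqrt (u i) * sqrt (v i))\<^sup>2 \<le> (\<Sum>i\<in>I. (sqrt (u i))\<^sup>2) * (\<Sum>i\<in>I. (sqrt (v i))\<^sup>2)"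
    by (rule Cauchy_Schwarz_ineq_sum)
  also have "\<dots> = (\<Sum>i\<in>I. u i) * (\<Sum>i\<in>I. v i)"
    using assms by (simp cong: sum.cong)
  also have "\<dots> = (sqrt (\<Sum>i\<in>I. u i) * sqrt (\<Sum>i\<in>I. v i))\<^sup>2"
    using assms by (simp add: power_mult_distrib sum_nonneg)
  finally have "(\<Sum>i\<in>I. sqrt (u i) * sqrt (v i))\<^sup>2 \<le> (sqrt (\<Sum>i\<in>I. u i) * sqrt (\<Sum>i\<in>I. v i))\<^sup>2" .
  moreover have "0 \<le> sqrt (\<Sum>i\<in>I. u i) * sqrt (\<Sum>i\<in>I. v i)"
    using assms by (simp add: sum_nonneg)
  ultimately show ?thesis
    using power2_le_imp_le by blast
qed

lemma sum_sqrt_mult_matching_le: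
  fixes px :: "'x \<Rightarrow> real" and py :: "'y \<Rightarrow> real"
  assumes "finite A" "finite B" "C \<subseteq> A \<times> B" "inj_on fst C" "inj_on snd C"
    and "\<And>x. px x \<ge> 0" "\<And>y. py y \<ge> 0"
  shows "(\<Sum>(x, y)\<in>C. sqrt (px x) * sqrt (py y)) \<le> sqrt (sum px A) * sqrt (sum py B)"
proof -
  have "(\<Sum>(x, y)\<in>C. sqrt (px x) * sqrt (py y))
      \<le> sqrt (\<Sum>z\<in>C. px (fst z)) * sqrt (\<Sum>z\<in>C. py (snd z))"
    unfolding case_prod_beta by (rule sum_sqrt_mult_le) (simp_all add: assms)
  also have "(\<Sum>z\<in>C. px (fst z)) = sum px (fst ` C)"
    using assms(4) by (simp add: sum.reindex)
  also have "(\<Sum>z\<in>C. py (snd z)) = sum py (snd ` C)"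
    using assms(5) by (simp add: sum.reindex)
  also have "sqrt (sum px (fst ` C)) * sqrt (sum py (snd ` C)) \<le> sqrt (sum px A) * sqrt (sum py B)"
    using assms by (intro mult_mono real_sqrt_le_mono sum_mono2) (auto simp: sum_nonneg)
  finally show ?thesis .
qed

lemma sum_sqrt_mult_le_sqrt_card_fibres:
  fixes px :: "'x::finite \<Rightarrow> real" and py :: "'y::finite \<Rightarrow> real" and \<tau> :: "'x \<Rightarrow> 'y \<Rightarrow> 'k"
  assumes "finite K" and \<tau>_in: "\<And>x y. \<tau> x y \<in> K"
    and rectangle: "\<And>x y x' y'. \<tau> x y = \<tau> x' y' \<Longrightarrow> \<tau> x y' = \<tau> x y"
    and matching: "\<And>x y x' y'. (x, y) \<in> C \<Longrightarrow> (x', y') \<in> C \<Longrightarrow> \<tau> x y = \<tau> x' y' \<Longrightarrow> x = x' \<longleftrightarrow> y = y'"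
    and "\<And>x. px x \<ge> 0" "\<And>y. py y \<ge> 0"
  shows "(\<Sum>(x, y)\<in>C. sqrt (px x) * sqrt (py y)) \<le> sqrt (card K) * sqrt (sum px UNIV * sum py UNIV)"
proof -
  define A where "A k = {x. \<exists>y. \<tau> x y = k}" for k
  define B where "B k = {y. \<exists>x. \<tau> x y = k}" for k
  define Ck where "Ck k = {z \<in> C. case_prod \<tau> z = k}" for k
  have fibre: "A k \<times> B k = {z. case_prod \<tau> z = k}" for k
    unfolding A_def B_def by (auto, metis rectangle)
  have "(\<Sum>(x, y)\<in>C. sqrt (px x) * sqrt (py y)) = (\<Sum>k\<in>K. \<Sum>(x, y)\<in>Ck k. sqrt (px x) * sqrt (py y))"
    unfolding Ck_def by (rule sum.group[symmetric]) (auto simp: assms(1) \<tau>_in)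
  also have "\<dots> \<le> (\<Sum>k\<in>K. sqrt (sum px (A k)) * sqrt (sum py (B k)))"
  proof (rule sum_mono, rule sum_sqrt_mult_matching_le)
    fix k
    show "Ck k \<subseteq> A k \<times> B k"
      using fibre by (auto simp: Ck_def)
    show "inj_on fst (Ck k)" "inj_on snd (Ck k)"
      by (auto intro!: inj_onI simp: Ck_def dest: matching)
  qed (simp_all add: assms)
  also have "\<dots> \<le> sqrt (\<Sum>k\<in>K. 1) * sqrt (\<Sum>k\<in>K. sum px (A k) * sum py (B k))"
    using sum_sqrt_mult_le[of K "\<lambda>_. 1" "\<lambda>k. sum px (A k) * sum py (B k)"]
    by (simp add: real_sqrt_mult assms sum_nonneg)
  also have "(\<Sum>k\<in>K. sum px (A k) * sum py (B k)) = (\<Sum>k\<in>K. \<Sum>z\<in>{z. case_prod \<tau> z = k}. px (fst z) * py (snd z))"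
    unfolding fibre[symmetric] by (simp add: sum_product sum.cartesian_product case_prod_beta)
  also have "\<dots> = (\<Sum>z\<in>UNIV. px (fst z) * py (snd z))"
    using sum.group[of UNIV K "case_prod \<tau>" "\<lambda>z. px (fst z) * py (snd z)"] assms(1) \<tau>_in
    by fastforce
  also have "\<dots> = sum px UNIV * sum py UNIV"
    by (simp add: sum_product sum.cartesian_product case_prod_beta flip: UNIV_Times_UNIV)
  finally show ?thesis by simp
qed

lemma pmf_le_marginal_fst: "pmf P (x, y) \<le> pmf (map_pmf fst P) x"
  unfolding pmf_map by (simp add: measure_pmf_single[symmetric] measure_pmf.finite_measure_mono)

lemma pmf_le_marginal_snd: "pmf P (x, y) \<le> pmf (map_pmf snd P) y"
  unfolding pmf_map by (simp add: measure_pmf_single[symmetric] measure_pmf.finite_measure_mono)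

text \<open>\<open>2 powr (- h_sum P x y)\<close> is \<open>P(x,y)\<^sup>2 / (P\<^sub>X(x) P\<^sub>Y(y))\<close>.\<close>
lemma pmf_le_sqrt_marginals:
  assumes "h_sum P x y > \<gamma>"
  shows "pmf P (x, y) \<le> 2 powr (-\<gamma>/2) * (sqrt (pmf (map_pmf fst P) x) * sqrt (pmf (map_pmf snd P) y))"
proof (cases "pmf P (x, y) = 0")
  case False
  define p a b where "p = pmf P (x, y)" and "a = pmf (map_pmf fst P) x" and "b = pmf (map_pmf snd P) y"
  have p: "p > 0"
    using False by (simp add: p_def order_le_neq_trans)
  moreover have "p \<le> a" "p \<le> b"
    unfolding p_def a_def b_def by (rule pmf_le_marginal_fst pmf_le_marginal_snd)+
  ultimately have pos: "a > 0" "b > 0" by auto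
  have "2 powr (- h_sum P x y) = 2 powr (log 2 (p / b) + log 2 (p / a))"
    by (simp add: h_sum_def p_def a_def b_def add.commute)
  also have "\<dots> = p * p / (a * b)"
    using p pos by (simp add: powr_add)
  finally have "p * p / (a * b) \<le> 2 powr (-\<gamma>)"
    using assms by (metis powr_mono le_less neg_less_iff_less one_le_numeral)
  then have "p * p \<le> 2 powr (-\<gamma>) * (a * b)"
    using pos by (simp add: divide_le_eq)
  then have "sqrt (p * p) \<le> sqrt (2 powr (-\<gamma>)) * (sqrt a * sqrt b)"
    by (metis real_sqrt_le_mono real_sqrt_mult)
  moreover have "sqrt (2 powr (-\<gamma>)) = 2 powr (-\<gamma>/2)"
    using powr_half_sqrt_powr[of 2 "-\<gamma>"] by simp
  ultimately show ?thesis
    using p by (simp add: p_def a_def b_def)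
qed simp

lemma prob_matching_high_entropy_le:
  fixes P :: "('x::finite \<times> 'y::finite) pmf" and \<tau> :: "'x \<Rightarrow> 'y \<Rightarrow> 'k" and \<gamma> :: real
  assumes "finite K" "\<And>x y. \<tau> x y \<in> K"
    and "\<And>x y x' y'. \<tau> x y = \<tau> x' y' \<Longrightarrow> \<tau> x y' = \<tau> x y"
    and "\<And>x y x' y'. (x, y) \<in> C \<Longrightarrow> (x', y') \<in> C \<Longrightarrow> \<tau> x y = \<tau> x' y' \<Longrightarrow> x = x' \<longleftrightarrow> y = y'"
  shows "measure_pmf.prob P (C \<inter> {(x, y). h_sum P x y > \<gamma>}) \<le> 2 powr (-\<gamma>/2) * sqrt (card K)"
proof -
  let ?H = "{(x, y). h_sum P x y > \<gamma>}"
  let ?g = "\<lambda>(x, y). sqrt (pmf (map_pmf fst P) x) * sqrt (pmf (map_pmf snd P) y)"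
  have "measure_pmf.prob P (C \<inter> ?H) = (\<Sum>z\<in>C \<inter> ?H. pmf P z)"
    by (simp add: measure_measure_pmf_finite)
  also have "\<dots> \<le> (\<Sum>z\<in>C \<inter> ?H. 2 powr (-\<gamma>/2) * ?g z)"
    by (rule sum_mono) (use pmf_le_sqrt_marginals in force)
  also have "\<dots> \<le> 2 powr (-\<gamma>/2) * (\<Sum>z\<in>C. ?g z)"
    unfolding sum_distrib_left[symmetric]
    by (intro mult_left_mono sum_mono2) (auto simp: case_prod_beta)
  also have "(\<Sum>z\<in>C. ?g z) \<le> sqrt (card K)"
    using sum_sqrt_mult_le_sqrt_card_fibres[OF assms, where px = "pmf (map_pmf fst P)" and py = "pmf (map_pmf snd P)"]
    by (simp add: sum_pmf_eq_1)
  finally show ?thesis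
    by simp
qed

text \<open>The protocol with its randomness fixed: the views of the parties are \<open>\<alpha> x\<close> and \<open>\<beta> y\<close>.\<close>
lemma prob_deterministic_exchange_le:
  fixes P :: "('x::finite \<times> 'y::finite) pmf" and t :: "('a, 'b) ptree"
    and \<alpha> :: "'x \<Rightarrow> 'a" and \<beta> :: "'y \<Rightarrow> 'b"
    and Xhat :: "bool list \<Rightarrow> 'y \<Rightarrow> 'x" and Yhat :: "bool list \<Rightarrow> 'x \<Rightarrow> 'y" and \<gamma> :: real
  shows "measure_pmf.prob P {(x, y). Xhat (transcript t (\<alpha> x) (\<beta> y)) y = x \<and> Yhat (transcript t (\<alpha> x) (\<beta> y)) x = y}
         \<le> 2 powr ((ptree_depth t - \<gamma>) / 2) + (1 - measure_pmf.prob P {(x, y). h_sum P x y > \<gamma>})"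
proof -
  define \<tau> where "\<tau> x y = transcript t (\<alpha> x) (\<beta> y)" for x y
  define C where "C = {(x, y). Xhat (\<tau> x y) y = x \<and> Yhat (\<tau> x y) x = y}"
  define H where "H = {(x, y). h_sum P x y > \<gamma>}"
  have "measure_pmf.prob P C \<le> measure_pmf.prob P ((C \<inter> H) \<union> (UNIV - H))"
    by (rule measure_pmf.finite_measure_mono) auto
  also have "\<dots> \<le> measure_pmf.prob P (C \<inter> H) + (1 - measure_pmf.prob P H)"
    using measure_Un_le[of "C \<inter> H" "measure_pmf P" "UNIV - H"] measure_pmf.prob_compl[of H P]
    by simp
  also have "measure_pmf.prob P (C \<inter> H) \<le> 2 powr (-\<gamma>/2) * sqrt (card (leaves t))"
    unfolding C_def H_def
  proof (rule prob_matching_high_entropy_le)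
    show "\<tau> x y' = \<tau> x y" if "\<tau> x y = \<tau> x' y'" for x y x' y'
      using that unfolding \<tau>_def by (rule transcript_rectangle)
    show "x = x' \<longleftrightarrow> y = y'"
      if "(x, y) \<in> {(x, y). Xhat (\<tau> x y) y = x \<and> Yhat (\<tau> x y) x = y}"
        and "(x', y') \<in> {(x, y). Xhat (\<tau> x y) y = x \<and> Yhat (\<tau> x y) x = y}"
        and "\<tau> x y = \<tau> x' y'" for x y x' y'
      using that by (simp only: mem_Collect_eq case_prod_conv) metis
  qed (simp_all add: finite_leaves transcript_in_leaves \<tau>_def)
  also have "sqrt (card (leaves t)) \<le> 2 powr (ptree_depth t / 2)"
  proof -
    have "real (card (leaves t)) \<le> 2 powr ptree_depth t"
      using card_leaves_le[of t] by (simp add: powr_realpow flip: of_nat_le_iff)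
    then show ?thesis
      using powr_half_sqrt_powr[of 2 "ptree_depth t"] by simp
  qed
  finally show ?thesis
    unfolding C_def H_def \<tau>_def
    by (simp add: powr_add[symmetric] diff_divide_distrib mult_left_mono)
qed

lemma measure_pair_le_of_slices:
  assumes "prob_space M" "prob_space N" "S \<in> sets (M \<Otimes>\<^sub>M N)"
    and slice: "\<And>\<omega>. \<omega> \<in> space N \<Longrightarrow> measure M ((\<lambda>x. (x, \<omega>)) -` S) \<le> B"
  shows "measure (M \<Otimes>\<^sub>M N) S \<le> B"
proof -
  interpret M: prob_space M by fact
  interpret N: prob_space N by fact
  interpret pair_prob_space M N ..
  obtain \<omega> where "\<omega> \<in> space N"
    using N.not_empty by blast
  with slice have "B \<ge> 0"
    using measure_nonneg order_trans by blast
  have "emeasure (M \<Otimes>\<^sub>M N) S = (\<integral>\<^sup>+\<omega>. emeasure M ((\<lambda>x. (x, \<omega>)) -` S) \<partial>N)"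
    by (rule emeasure_pair_measure_alt2) fact
  also have "\<dots> \<le> (\<integral>\<^sup>+\<omega>. ennreal B \<partial>N)"
    by (intro nn_integral_mono) (simp add: M.emeasure_eq_measure slice ennreal_leI)
  also have "\<dots> = ennreal B"
    by (simp add: N.emeasure_space_1)
  finally show ?thesis
    using \<open>B \<ge> 0\<close> by (simp add: P.emeasure_eq_measure)
qed

lemma data_exchange_converse:
  fixes P :: "('x::finite \<times> 'y::finite) pmf" and t :: "('x \<times> 'ux \<times> 'u, 'y \<times> 'uy \<times> 'u) ptree"
    and MX :: "'ux measure" and MY :: "'uy measure" and MU :: "'u measure" and \<gamma> \<epsilon> :: real
  assumes "prob_space MX" "prob_space MY" "prob_space MU"
    and "attains_data_exchange P MX MY MU t \<epsilon>"
  shows "measure_pmf.prob P {(x, y). h_sum P x y > \<gamma>} - \<epsilon> \<le> 2 powr ((ptree_depth t - \<gamma>) / 2)"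
proof -
  let ?M = "protocol_space P MX MY MU"
  let ?P\<gamma> = "measure_pmf.prob P {(x, y). h_sum P x y > \<gamma>}"
  from assms(4) obtain Yhat :: "bool list \<Rightarrow> 'x \<times> 'ux \<times> 'u \<Rightarrow> 'y"
      and Xhat :: "bool list \<Rightarrow> 'y \<times> 'uy \<times> 'u \<Rightarrow> 'x" where
    success: "measure ?M {\<omega> \<in> space ?M. case \<omega> of ((x, y), (ux, uy, u)) \<Rightarrow>
        Xhat (transcript t (x, ux, u) (y, uy, u)) (y, uy, u) = x \<and>
        Yhat (transcript t (x, ux, u) (y, uy, u)) (x, ux, u) = y} \<ge> 1 - \<epsilon>"
      (is "measure ?M ?S \<ge> _")
    unfolding attains_data_exchange_def by blast
  show ?thesis
  proof (cases "?S \<in> sets ?M")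
    case True
    define R where "R = MX \<Otimes>\<^sub>M (MY \<Otimes>\<^sub>M MU)"
    have M: "?M = measure_pmf P \<Otimes>\<^sub>M R"
      by (simp add: protocol_space_def R_def)
    have "measure (measure_pmf P \<Otimes>\<^sub>M R) ?S \<le> 2 powr ((ptree_depth t - \<gamma>) / 2) + (1 - ?P\<gamma>)"
    proof (rule measure_pair_le_of_slices)
      show "prob_space R"
        unfolding R_def by (intro prob_space_pair assms)
      show "?S \<in> sets (measure_pmf P \<Otimes>\<^sub>M R)"
        using True unfolding M .
      fix \<omega> assume "\<omega> \<in> space R"
      moreover obtain ux uy u where "\<omega> = (ux, uy, u)"
        by (cases \<omega>) auto
      ultimately have "(\<lambda>xy. (xy, \<omega>)) -` ?S = {(x, y).
          Xhat (transcript t (x, ux, u) (y, uy, u)) (y, uy, u) = x \<and>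
          Yhat (transcript t (x, ux, u) (y, uy, u)) (x, ux, u) = y}"
        unfolding M by (auto simp: space_pair_measure)
      then show "measure_pmf.prob P ((\<lambda>xy. (xy, \<omega>)) -` ?S) \<le> 2 powr ((ptree_depth t - \<gamma>) / 2) + (1 - ?P\<gamma>)"
        using prob_deterministic_exchange_le[of P "\<lambda>tr y. Xhat tr (y, uy, u)" t "\<lambda>x. (x, ux, u)"
            "\<lambda>y. (y, uy, u)" "\<lambda>tr x. Yhat tr (x, ux, u)" \<gamma>]
        by simp
    qed (rule prob_space_measure_pmf)
    then have "measure ?M ?S \<le> 2 powr ((ptree_depth t - \<gamma>) / 2) + (1 - ?P\<gamma>)"
      unfolding M .
    with success show ?thesis
      by linarith
  next
    case False
    then have "measure ?M ?S = 0"
      by (rule measure_notin_sets)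
    with success have "\<epsilon> \<ge> 1"
      by linarith
    moreover have "?P\<gamma> \<le> 1"
      by (rule measure_pmf.prob_le_1)
    ultimately show ?thesis
      using powr_ge_zero[of 2 "(ptree_depth t - \<gamma>) / 2"] by linarith
  qed
qed

lemma data_exchange_depth_ge:
  fixes P :: "('x::finite \<times> 'y::finite) pmf" and t :: "('x \<times> 'ux \<times> 'u, 'y \<times> 'uy \<times> 'u) ptree"
    and MX :: "'ux measure" and MY :: "'uy measure" and MU :: "'u measure" and \<gamma> \<epsilon> q :: real
  assumes "prob_space MX" "prob_space MY" "prob_space MU"
    and "attains_data_exchange P MX MY MU t \<epsilon>"
    and "0 < q" "q \<le> measure_pmf.prob P {(x, y). h_sum P x y > \<gamma>} - \<epsilon>"
  shows "\<gamma> + 2 * log 2 q \<le> ptree_depth t"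
proof -
  have "q \<le> 2 powr ((ptree_depth t - \<gamma>) / 2)"
    using assms(6) data_exchange_converse[OF assms(1-4), of \<gamma>] by linarith
  then have "log 2 q \<le> (ptree_depth t - \<gamma>) / 2"
    using assms(5) by (subst log_le_iff) simp_all
  then show ?thesis
    by simp
qed

lemma ereal_log2e_sum_le:
  fixes q r \<gamma> \<Delta> c d D :: real
  assumes "q > 0 \<Longrightarrow> r > 0 \<Longrightarrow> \<gamma> + 3 * log 2 q + log 2 r - \<Delta> - c - d - 1 \<le> D"
  shows "ereal \<gamma> + 3 * log2e q + log2e r - ereal \<Delta> - ereal c - ereal d - 1 \<le> ereal D"
proof (cases "q > 0 \<and> r > 0")
  case True
  then show ?thesis
    using assms by (simp add: log2e_def one_ereal_def)
next
  case False
  then show ?thesis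
    by (auto simp: log2e_def one_ereal_def)
qed

theorem theorem3:
  fixes P :: "('x::finite \<times> 'y::finite) pmf"
    and lmin lmax \<Delta> \<epsilon> \<eta> \<gamma> :: real
  assumes "lmin < lmax" and "\<Delta> > 0"
    and "0 \<le> \<epsilon>" and "\<epsilon> < 1" and "0 < \<eta>" and "\<eta> < 1 - \<epsilon>"
    and "\<gamma> > 0"
  defines "N \<equiv> (lmax - lmin) / \<Delta>"
  defines "P\<gamma> \<equiv> measure_pmf.prob P {(x, y). h_sum P x y > \<gamma>}"
  shows "ereal \<gamma>
           + 3 * log2e (max (P\<gamma> - \<epsilon> - measure_pmf.prob P (T0 P lmin lmax) - 1 / N) 0)
           + log2e (1 - 2 * \<eta>) - ereal \<Delta> - ereal (6 * log 2 N)
           - ereal (4 * log 2 (1 / \<eta>)) - 1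
         \<le> L_eps P \<epsilon> TYPE('ux \<times> 'uy \<times> 'u)"
proof -
  define q where "q = max (P\<gamma> - \<epsilon> - measure_pmf.prob P (T0 P lmin lmax) - 1 / N) 0"
  have "N > 0"
    using assms(1,2) by (simp add: N_def)
  have q: "q \<le> P\<gamma> - \<epsilon>" "q \<le> 1" "N > 1" if "0 < q"
  proof -
    have "q = P\<gamma> - \<epsilon> - measure_pmf.prob P (T0 P lmin lmax) - 1 / N"
      using that by (simp add: q_def max_def split: if_splits)
    moreover have "P\<gamma> \<le> 1" "measure_pmf.prob P (T0 P lmin lmax) \<ge> 0" "1 / N > 0"
      using \<open>N > 0\<close> by (simp_all add: P\<gamma>_def)
    ultimately have "q \<le> P\<gamma> - \<epsilon>" "q \<le> 1" "1 / N < 1"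
      using that assms(3) by linarith+
    then show "q \<le> P\<gamma> - \<epsilon>" "q \<le> 1" "N > 1"
      using \<open>N > 0\<close> by (simp_all add: divide_less_eq)
  qed
  have "\<gamma> + 3 * log 2 q + log 2 (1 - 2 * \<eta>) - \<Delta> - 6 * log 2 N - 4 * log 2 (1 / \<eta>) - 1
          \<le> real (ptree_depth t)"
    if "0 < q" "0 < 1 - 2 * \<eta>" and protocol: "prob_space MX" "prob_space MY" "prob_space MU"
      "attains_data_exchange P MX MY MU t \<epsilon>"
    for t :: "('x \<times> 'ux \<times> 'u, 'y \<times> 'uy \<times> 'u) ptree" and MX :: "'ux measure"
      and MY :: "'uy measure" and MU :: "'u measure"
  proof -
    have "\<gamma> + 2 * log 2 q \<le> ptree_depth t"
      using data_exchange_depth_ge[OF protocol that(1)] q(1)[OF that(1)] by (simp add: P\<gamma>_def)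
    moreover have "log 2 q \<le> 0" "log 2 (1 - 2 * \<eta>) \<le> 0" "log 2 N \<ge> 0" "log 2 (1 / \<eta>) \<ge> 0"
      using q[OF that(1)] that(1,2) assms(3,5,6) by simp_all
    ultimately show ?thesis
      using assms(2) by linarith
  qed
  then show ?thesis
    unfolding L_eps_def q_def[symmetric]
    by (intro Inf_greatest) (clarify; rule ereal_log2e_sum_le; blast)
qed

end
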